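(* Let $G$ be a finite graph and let $v$ be a vertex of $G$ of degree at most five such that there is no $v$-immersion of $K_6$ into $G$. If $G-v$ has a proper $5$-coloring, then so does $G$.
   Context: Graphs are finite and simple. An immersion of $G'$ into $G$ is a function $\alpha$ on $V(G')\cup E(G')$ such that: $\alpha$ restricted to $V(G')$ is an injection into $V(G)$; for each edge $e=uw$ of $G'$, $\alpha(e)$ is a path in $G$ with ends $\alpha(u)$ and $\alpha(w)$; and for distinct edges $e,f$ of $G'$ the paths $\alpha(e),\alpha(f)$ are edge-disjoint. It is essential if moreover $\alpha(e)$ and $\alpha(f)$ are vertex-disjoint whenever $e$ and $f$ are non-adjacent edges. For a vertex $v$ of $G$, a $v$-immersion of $G'$ into $G$ is an essential immersion $\alpha$ of $G'$ into $G$ such that $v=\alpha(u)$ for some vertex $u$ of $G'$ and $\alpha(e)$ is a single-edge path for every edge $e$ of $G'$ incident with $u$. A proper coloring assigns colors to vertices so that adjacent vertices receive distinct colors. *)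

theory Defs
  imports Main
begin

definition simple_graph :: "'a set \<Rightarrow> 'a set set \<Rightarrow> bool" where
  "simple_graph V E \<longleftrightarrow> finite V \<and> (\<forall>e\<in>E. e \<subseteq> V \<and> card e = 2)"

definition degree :: "'a set set \<Rightarrow> 'a \<Rightarrow> nat" where
  "degree E v = card {e\<in>E. v \<in> e}"

definition del_vertex_V :: "'a set \<Rightarrow> 'a \<Rightarrow> 'a set" where
  "del_vertex_V V v = V - {v}"
definition del_vertex_E :: "'a set set \<Rightarrow> 'a \<Rightarrow> 'a set set" where
  "del_vertex_E E v = {e\<in>E. v \<notin> e}"

definition proper_coloring :: "'a set \<Rightarrow> 'a set set \<Rightarrow> nat \<Rightarrow> ('a \<Rightarrow> nat) \<Rightarrow> bool" where
  "proper_coloring V E k c \<longleftrightarrow> (\<forall>x\<in>V. c x < k) \<and> (\<forall>x y. {x, y} \<in> E \<longrightarrow> c x \<noteq> c y)"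

definition colorable :: "'a set \<Rightarrow> 'a set set \<Rightarrow> nat \<Rightarrow> bool" where
  "colorable V E k \<longleftrightarrow> (\<exists>c. proper_coloring V E k c)"

definition is_path :: "'a set \<Rightarrow> 'a set set \<Rightarrow> 'a list \<Rightarrow> bool" where
  "is_path V E p \<longleftrightarrow> p \<noteq> [] \<and> distinct p \<and> set p \<subseteq> V \<and>
     (\<forall>i. Suc i < length p \<longrightarrow> {p ! i, p ! Suc i} \<in> E)"

definition path_edges :: "'a list \<Rightarrow> 'a set set" where
  "path_edges p = {{p ! i, p ! Suc i} | i. Suc i < length p}"

definition immersion ::
  "'b set \<Rightarrow> 'b set set \<Rightarrow> 'a set \<Rightarrow> 'a set set \<Rightarrow> ('b \<Rightarrow> 'a) \<Rightarrow> ('b set \<Rightarrow> 'a list) \<Rightarrow> bool" where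
  "immersion V' E' V E f P \<longleftrightarrow>
     inj_on f V' \<and> f ` V' \<subseteq> V \<and>
     (\<forall>e\<in>E'. is_path V E (P e) \<and> {hd (P e), last (P e)} = f ` e) \<and>
     (\<forall>e\<in>E'. \<forall>e'\<in>E'. e \<noteq> e' \<longrightarrow> path_edges (P e) \<inter> path_edges (P e') = {})"

definition essential_immersion ::
  "'b set \<Rightarrow> 'b set set \<Rightarrow> 'a set \<Rightarrow> 'a set set \<Rightarrow> ('b \<Rightarrow> 'a) \<Rightarrow> ('b set \<Rightarrow> 'a list) \<Rightarrow> bool" where
  "essential_immersion V' E' V E f P \<longleftrightarrow>
     immersion V' E' V E f P \<and>
     (\<forall>e\<in>E'. \<forall>e'\<in>E'. e \<inter> e' = {} \<longrightarrow> set (P e) \<inter> set (P e') = {})"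

definition v_immersion ::
  "'a \<Rightarrow> 'b set \<Rightarrow> 'b set set \<Rightarrow> 'a set \<Rightarrow> 'a set set \<Rightarrow> ('b \<Rightarrow> 'a) \<Rightarrow> ('b set \<Rightarrow> 'a list) \<Rightarrow> bool" where
  "v_immersion v V' E' V E f P \<longleftrightarrow>
     essential_immersion V' E' V E f P \<and>
     (\<exists>u\<in>V'. f u = v \<and> (\<forall>e\<in>E'. u \<in> e \<longrightarrow> length (P e) = 2))"

definition K_V :: "nat \<Rightarrow> nat set" where
  "K_V n = {0..<n}"
definition K_E :: "nat \<Rightarrow> nat set set" where
  "K_E n = {{i, j} | i j. i < n \<and> j < n \<and> i \<noteq> j}"

end

theory Submission
  imports Defs "HOL-Library.Transitive_Closure_Table"
begin

(*
  Suppose G is not 5-colorable and fix a 5-coloring c of G - v. Every color occurs on a neighbor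
  of v, since otherwise v could be colored; as v has degree at most five, its neighbors
  w_0, ..., w_4 get pairwise distinct colors. For a < b the vertices w_a and w_b lie in the same
  {a,b}-Kempe chain of G - v: otherwise swapping a and b on the chain of w_a frees the color a at v.
  Send the apex of K_6 to v, its edges to the edges v w_a, and the edge between w_a and w_b to an
  {a,b}-colored path. Giving v the new color 5, every edge of the path chosen for an edge of K_6
  carries exactly the colors of that edge's ends; hence distinct paths share no edge, and paths of
  disjoint edges share no vertex.
*)

lemma simple_graph_edgeD:
  assumes "simple_graph V E" "{x, y} \<in> E"
  shows "x \<noteq> y" "x \<in> V" "y \<in> V"
  using assms unfolding simple_graph_def by (auto simp: card_insert_if split: if_splits)

lemma simple_graph_del_vertex:
  assumes "simple_graph V E"
  shows "simple_graph (V - {v}) (del_vertex_E E v)"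
  using assms unfolding simple_graph_def del_vertex_E_def by auto

lemma degree_eq_card_neighbors:
  assumes "simple_graph V E"
  shows "degree E v = card {u. {v, u} \<in> E}"
proof -
  have "{e \<in> E. v \<in> e} \<subseteq> (\<lambda>u. {v, u}) ` {u. {v, u} \<in> E}"
  proof
    fix e assume e: "e \<in> {e \<in> E. v \<in> e}"
    then have "card e = 2" using assms unfolding simple_graph_def by blast
    then obtain x y where "e = {x, y}" unfolding card_2_iff by blast
    with e show "e \<in> (\<lambda>u. {v, u}) ` {u. {v, u} \<in> E}" by (auto simp: insert_commute)
  qed
  then have "{e \<in> E. v \<in> e} = (\<lambda>u. {v, u}) ` {u. {v, u} \<in> E}" by blast
  moreover have "inj_on (\<lambda>u. {v, u}) {u. {v, u} \<in> E}" by (auto simp: inj_on_def doubleton_eq_iff)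
  ultimately show ?thesis unfolding degree_def by (simp add: card_image)
qed

lemma is_path_mono:
  assumes "is_path V' E' p" "V' \<subseteq> V" "E' \<subseteq> E"
  shows "is_path V E p"
  using assms unfolding is_path_def by blast

lemma path_edges_subset:
  assumes "is_path V E p" "ed \<in> path_edges p"
  obtains x y where "ed = {x, y}" "{x, y} \<in> E" "x \<in> set p" "y \<in> set p"
  using assms unfolding is_path_def path_edges_def by auto

lemma is_path_edge:
  assumes "simple_graph V E" "{x, y} \<in> E"
  shows "is_path V E [x, y]"
  using simple_graph_edgeD[OF assms] assms(2) unfolding is_path_def by (simp add: less_Suc_eq)

lemma K_E_cases:
  assumes "e \<in> K_E n"
  obtains i j where "e = {i, j}" "i < j" "j < n"
proof -
  obtain i j where "e = {i, j}" "i \<noteq> j" "i < n" "j < n" using assms unfolding K_E_def by blast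
  then show ?thesis using that[of i j] that[of j i] by (cases "i < j") (auto simp: insert_commute)
qed

(* The {a,b}-Kempe chain of x is the set of z with (adj_within E (%z. c z : {a, b}))^** x z. *)

definition adj_within :: "'a set set \<Rightarrow> ('a \<Rightarrow> bool) \<Rightarrow> 'a \<Rightarrow> 'a \<Rightarrow> bool" where
  "adj_within E P x y \<longleftrightarrow> {x, y} \<in> E \<and> P x \<and> P y"

lemma adj_within_rtranclp_pred:
  assumes "(adj_within E P)\<^sup>*\<^sup>* x y" "P x"
  shows "P y"
  using assms by (induction rule: rtranclp_induct) (auto simp: adj_within_def)

lemma adj_within_rtranclp_into:
  assumes "(adj_within E P)\<^sup>*\<^sup>* x y" "P x" "{y, z} \<in> E" "P z"
  shows "(adj_within E P)\<^sup>*\<^sup>* x z"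
  using assms adj_within_rtranclp_pred[OF assms(1,2)]
  by (simp add: adj_within_def rtranclp.rtrancl_into_rtrancl)

lemma adj_within_rtranclp_path:
  assumes "simple_graph V E" "(adj_within E P)\<^sup>*\<^sup>* x y" "x \<in> V" "P x"
  shows "\<exists>p. is_path V E p \<and> hd p = x \<and> last p = y \<and> (\<forall>z\<in>set p. P z)"
proof -
  obtain xs where "rtrancl_path (adj_within E P) x xs y"
    using assms(2) rtranclp_eq_rtrancl_path by metis
  then obtain xs where xs: "rtrancl_path (adj_within E P) x xs y" "distinct (x # xs)"
    using rtrancl_path_distinct by metis
  have last: "last (x # xs) = y"
    using xs(1) rtrancl_path_last[OF xs(1)] by (cases "xs = []") (auto elim: rtrancl_path.cases)
  have step: "adj_within E P ((x # xs) ! i) ((x # xs) ! Suc i)" if "Suc i < length (x # xs)" for i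
    using rtrancl_path_nth[OF xs(1)] that by simp
  have inner: "z \<in> V \<and> P z" if z: "z \<in> set xs" for z
  proof -
    obtain u where "adj_within E P u z" using rtrancl_path_Range[OF xs(1) z] by blast
    then show ?thesis using simple_graph_edgeD[OF assms(1)] unfolding adj_within_def by blast
  qed
  have "is_path V E (x # xs)"
    unfolding is_path_def using xs(2) assms(3) inner step by (auto simp: adj_within_def)
  then show ?thesis using last assms(4) inner by (intro exI[of _ "x # xs"]) auto
qed

lemma proper_coloring_extend:
  assumes "simple_graph V E" "proper_coloring (V - {v}) (del_vertex_E E v) k c"
    and "a < k" "\<And>u. {v, u} \<in> E \<Longrightarrow> c u \<noteq> a"
  shows "proper_coloring V E k (c(v := a))"
  using assms simple_graph_edgeD[OF assms(1)]
  unfolding proper_coloring_def del_vertex_E_def by (auto simp: insert_commute)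

lemma proper_coloring_fresh_color:
  assumes "simple_graph V E" "proper_coloring (V - {v}) (del_vertex_E E v) k c"
  shows "proper_coloring V E (Suc k) (c(v := k))"
proof (rule proper_coloring_extend[OF assms(1)])
  show "proper_coloring (V - {v}) (del_vertex_E E v) (Suc k) c"
    using assms(2) unfolding proper_coloring_def by (simp add: less_SucI)
  show "c u \<noteq> k" if "{v, u} \<in> E" for u
    using that assms(2) simple_graph_edgeD[OF assms(1)] unfolding proper_coloring_def by fastforce
qed simp

lemma kempe_swap:
  assumes c: "proper_coloring V E k c" and "a < k" "b < k" "c x = a"
  obtains c' where "proper_coloring V E k c'" "c' x = b"
    "\<And>z. c' z \<noteq> c z \<Longrightarrow> (adj_within E (\<lambda>z. c z \<in> {a, b}))\<^sup>*\<^sup>* x z"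
proof -
  define S where "S = {z. (adj_within E (\<lambda>z. c z \<in> {a, b}))\<^sup>*\<^sup>* x z}"
  have S_colors: "c z \<in> {a, b}" if "z \<in> S" for z
    using adj_within_rtranclp_pred[of E "\<lambda>z. c z \<in> {a, b}" x z] that \<open>c x = a\<close>
    unfolding S_def by simp
  have S_closed: "z' \<in> S" if "z \<in> S" "{z, z'} \<in> E" "c z' \<in> {a, b}" for z z'
    using adj_within_rtranclp_into[of E _ x z z'] that \<open>c x = a\<close> unfolding S_def by simp
  define c' where "c' z = (if z \<in> S then (if c z = a then b else a) else c z)" for z
  have "c' z \<noteq> c' z'" if edge: "{z, z'} \<in> E" for z z'
  proof -
    have "c z \<noteq> c z'" using edge c unfolding proper_coloring_def by blast
    have S_closed': "z \<in> S" if "z' \<in> S" "c z \<in> {a, b}"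
      using S_closed[of z' z] that edge by (simp add: insert_commute)
    consider "z \<in> S" "z' \<in> S" | "z \<in> S" "z' \<notin> S" | "z \<notin> S" "z' \<in> S" | "z \<notin> S" "z' \<notin> S"
      by blast
    then show ?thesis
    proof cases
      case 1
      then show ?thesis using S_colors[of z] S_colors[of z'] \<open>c z \<noteq> c z'\<close> unfolding c'_def by auto
    next
      case 2
      then show ?thesis using S_colors[of z] S_closed[OF _ edge] unfolding c'_def by auto
    next
      case 3
      then show ?thesis using S_colors[of z'] S_closed' unfolding c'_def by auto
    qed (use \<open>c z \<noteq> c z'\<close> in \<open>simp add: c'_def\<close>)
  qed
  moreover have "c' z < k" if "z \<in> V" for z
    using that c \<open>a < k\<close> \<open>b < k\<close> unfolding c'_def proper_coloring_def by simp
  moreover have "c' x = b" "x \<in> S" using \<open>c x = a\<close> unfolding c'_def S_def by auto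
  moreover have "z \<in> S" if "c' z \<noteq> c z" for z using that unfolding c'_def by presburger
  ultimately show ?thesis using that unfolding proper_coloring_def S_def by blast
qed

lemma bij_betw_colors_neighbors:
  assumes G: "simple_graph V E" and c: "proper_coloring (V - {v}) (del_vertex_E E v) k c"
    and "\<not> colorable V E k" "degree E v \<le> k"
  shows "bij_betw c {u. {v, u} \<in> E} {..<k}"
proof -
  define N where "N = {u. {v, u} \<in> E}"
  have N: "u \<in> V - {v}" if "u \<in> N" for u
    using that simple_graph_edgeD[OF G] unfolding N_def by blast
  have "c ` N \<subseteq> {..<k}" using N c unfolding proper_coloring_def by auto
  moreover have "{..<k} \<subseteq> c ` N"
  proof
    fix a assume "a \<in> {..<k}"
    show "a \<in> c ` N"
    proof (rule ccontr)
      assume "a \<notin> c ` N"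
      then have "proper_coloring V E k (c(v := a))"
        using \<open>a \<in> {..<k}\<close> by (intro proper_coloring_extend[OF G c]) (auto simp: N_def)
      then show False using \<open>\<not> colorable V E k\<close> unfolding colorable_def by blast
    qed
  qed
  ultimately have image: "c ` N = {..<k}" by blast
  have "finite N" using N G unfolding simple_graph_def by (meson Diff_subset finite_subset subsetI)
  moreover have "card N \<le> card (c ` N)"
    using \<open>degree E v \<le> k\<close> degree_eq_card_neighbors[OF G] image unfolding N_def by simp
  ultimately have "inj_on c N" using card_image_le eq_card_imp_inj_on le_antisym by metis
  then show ?thesis using image unfolding N_def bij_betw_def by blast
qed

lemma kempe_chain_to_neighbor:
  assumes G: "simple_graph V E" and c: "proper_coloring (V - {v}) (del_vertex_E E v) k c"
    and "\<not> colorable V E k" "a < k" "b < k" "a \<noteq> b"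
    and "c x = a" and x_unique: "\<And>u. {v, u} \<in> E \<Longrightarrow> c u = a \<Longrightarrow> u = x"
  shows "\<exists>y. {v, y} \<in> E \<and> c y = b \<and> (adj_within (del_vertex_E E v) (\<lambda>z. c z \<in> {a, b}))\<^sup>*\<^sup>* x y"
proof (rule ccontr)
  assume no_chain: "\<not> ?thesis"
  obtain c' where c': "proper_coloring (V - {v}) (del_vertex_E E v) k c'" "c' x = b"
    and changed: "\<And>z. c' z \<noteq> c z \<Longrightarrow> (adj_within (del_vertex_E E v) (\<lambda>z. c z \<in> {a, b}))\<^sup>*\<^sup>* x z"
    using kempe_swap[OF c \<open>a < k\<close> \<open>b < k\<close> \<open>c x = a\<close>] by blast
  have "c' u \<noteq> a" if "{v, u} \<in> E" for u
  proof (cases "u = x")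
    case False
    then have "c u \<noteq> a" using that x_unique by blast
    moreover have "c u \<in> {a, b}" if "c' u \<noteq> c u"
      using adj_within_rtranclp_pred[OF changed[OF that]] \<open>c x = a\<close> by simp
    ultimately show ?thesis using no_chain changed that by fastforce
  qed (use c' \<open>a \<noteq> b\<close> in simp)
  then have "proper_coloring V E k (c'(v := a))"
    by (intro proper_coloring_extend[OF G c'(1) \<open>a < k\<close>])
  then show False using \<open>\<not> colorable V E k\<close> unfolding colorable_def by blast
qed

lemma path_edge_colors:
  assumes "proper_coloring V E k col" "is_path V E p" "col ` set p \<subseteq> {A, B}" "ed \<in> path_edges p"
  shows "col ` ed = {A, B}"
proof -
  obtain x y where xy: "ed = {x, y}" "{x, y} \<in> E" "x \<in> set p" "y \<in> set p"
    using assms(2,4) by (rule path_edges_subset)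
  have "col x \<noteq> col y" using assms(1) xy(2) unfolding proper_coloring_def by blast
  then show ?thesis using assms(3) xy by auto
qed

lemma essential_immersion_KI:
  assumes col: "proper_coloring V E k col"
    and inj: "inj_on (col \<circ> f) (K_V n)" and "f ` K_V n \<subseteq> V"
    and paths: "\<And>e. e \<in> K_E n \<Longrightarrow>
      is_path V E (P e) \<and> {hd (P e), last (P e)} = f ` e \<and> col ` set (P e) \<subseteq> col ` f ` e"
  shows "essential_immersion (K_V n) (K_E n) V E f P"
proof -
  have K_sub: "e \<subseteq> K_V n" if "e \<in> K_E n" for e
    using that unfolding K_E_def K_V_def by auto
  have colors_eq_iff: "col ` f ` e = col ` f ` e' \<longleftrightarrow> e = e'" if "e \<in> K_E n" "e' \<in> K_E n" for e e'
    using inj_on_image_eq_iff[OF inj K_sub[OF that(1)] K_sub[OF that(2)]] by (simp add: image_comp)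
  have colors_Int: "col ` f ` e \<inter> col ` f ` e' = col ` f ` (e \<inter> e')"
    if "e \<in> K_E n" "e' \<in> K_E n" for e e'
    using inj_on_image_Int[OF inj K_sub[OF that(1)] K_sub[OF that(2)]] by (simp add: image_comp)
  have edge_colors: "col ` ed = col ` f ` e" if e: "e \<in> K_E n" and "ed \<in> path_edges (P e)" for e ed
  proof -
    obtain i j where "e = {i, j}" using e unfolding K_E_def by blast
    then show ?thesis using path_edge_colors[OF col _ _ \<open>ed \<in> path_edges (P e)\<close>] paths[OF e] by auto
  qed
  have "inj_on f (K_V n)" using inj by (rule inj_on_imageI2)
  moreover have "path_edges (P e) \<inter> path_edges (P e') = {}"
    if "e \<in> K_E n" "e' \<in> K_E n" "e \<noteq> e'" for e e'
  proof -
    have "col ` f ` e \<noteq> col ` f ` e'" using colors_eq_iff[OF that(1,2)] that(3) by simp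
    then show ?thesis using edge_colors[OF that(1)] edge_colors[OF that(2)] by (metis disjoint_iff)
  qed
  moreover have "set (P e) \<inter> set (P e') = {}"
    if "e \<in> K_E n" "e' \<in> K_E n" "e \<inter> e' = {}" for e e'
    using paths[OF that(1)] paths[OF that(2)] colors_Int[OF that(1,2)] that(3) by blast
  ultimately show ?thesis
    unfolding essential_immersion_def immersion_def using paths \<open>f ` K_V n \<subseteq> V\<close>
    by (intro conjI ballI impI) auto
qed

lemma v_immersion_KI:
  assumes col: "proper_coloring V E k col"
    and "inj_on (col \<circ> f) (K_V n)" "f ` K_V n \<subseteq> V" "0 < n" "f 0 = v"
    and paths: "\<And>e. e \<in> K_E n \<Longrightarrow> \<exists>p. is_path V E p \<and> {hd p, last p} = f ` e \<and>
      col ` set p \<subseteq> col ` f ` e \<and> (0 \<in> e \<longrightarrow> length p = 2)"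
  shows "\<exists>P. v_immersion v (K_V n) (K_E n) V E f P"
proof -
  define P where "P e = (SOME p. is_path V E p \<and> {hd p, last p} = f ` e \<and>
      col ` set p \<subseteq> col ` f ` e \<and> (0 \<in> e \<longrightarrow> length p = 2))" for e
  have P: "is_path V E (P e) \<and> {hd (P e), last (P e)} = f ` e \<and>
      col ` set (P e) \<subseteq> col ` f ` e \<and> (0 \<in> e \<longrightarrow> length (P e) = 2)" if "e \<in> K_E n" for e
    unfolding P_def by (rule someI_ex[OF paths[OF that]])
  have "essential_immersion (K_V n) (K_E n) V E f P"
    by (rule essential_immersion_KI[OF assms(1-3)]) (use P in blast)
  moreover have "0 \<in> K_V n" using \<open>0 < n\<close> unfolding K_V_def by simp
  moreover have "length (P e) = 2" if "e \<in> K_E n" "0 \<in> e" for e using P that by blast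
  ultimately show ?thesis unfolding v_immersion_def using \<open>f 0 = v\<close> by blast
qed

definition cone_map :: "'a \<Rightarrow> (nat \<Rightarrow> 'a) \<Rightarrow> nat \<Rightarrow> 'a" where
  "cone_map v w i = (if i = 0 then v else w (i - 1))"

context
  fixes V :: "'a set" and E :: "'a set set" and v :: 'a and k :: nat and c :: "'a \<Rightarrow> nat"
    and w :: "nat \<Rightarrow> 'a"
  assumes G: "simple_graph V E" and "v \<in> V"
    and c: "proper_coloring (V - {v}) (del_vertex_E E v) k c"
    and w: "\<And>a. a < k \<Longrightarrow> {v, w a} \<in> E \<and> c (w a) = a"
    and linked: "\<And>a b. a < b \<Longrightarrow> b < k \<Longrightarrow> \<exists>p. is_path (V - {v}) (del_vertex_E E v) p \<and>
      hd p = w a \<and> last p = w b \<and> c ` set p \<subseteq> {a, b}"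
begin

lemma cone_map_in_V: "i < Suc k \<Longrightarrow> cone_map v w i \<in> V"
  using \<open>v \<in> V\<close> w simple_graph_edgeD[OF G] unfolding cone_map_def by (metis less_Suc_eq_0_disj diff_Suc_1)

lemma color_cone_map: "i < Suc k \<Longrightarrow> (c(v := k)) (cone_map v w i) = (if i = 0 then k else i - 1)"
  using w simple_graph_edgeD[OF G] unfolding cone_map_def by (cases i) auto

lemma cone_edge_path:
  assumes "e \<in> K_E (Suc k)"
  shows "\<exists>p. is_path V E p \<and> {hd p, last p} = cone_map v w ` e \<and>
    (c(v := k)) ` set p \<subseteq> (c(v := k)) ` cone_map v w ` e \<and> (0 \<in> e \<longrightarrow> length p = 2)"
proof -
  obtain i j where ij: "e = {i, j}" "i < j" "j < Suc k"
    using assms by (rule K_E_cases)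
  let ?f = "cone_map v w" and ?col = "c(v := k)"
  have ends: "?f ` e = {?f i, ?f j}" "?col ` ?f ` e = {?col (?f i), ?col (?f j)}"
    using ij(1) by auto
  show ?thesis
  proof (cases "i = 0")
    case True
    have "is_path V E [v, w (j - 1)]" using is_path_edge[OF G] w ij by simp
    moreover have "?f i = v" "?f j = w (j - 1)" using True ij unfolding cone_map_def by auto
    ultimately show ?thesis using ends by (intro exI[of _ "[v, w (j - 1)]"]) simp
  next
    case False
    then have "i - 1 < j - 1" "j - 1 < k" using ij by auto
    then obtain p where p: "is_path (V - {v}) (del_vertex_E E v) p" "hd p = w (i - 1)" "last p = w (j - 1)"
      "c ` set p \<subseteq> {i - 1, j - 1}"
      using linked by blast
    have "is_path V E p" using p(1) by (rule is_path_mono) (auto simp: del_vertex_E_def)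
    moreover have "?col ` set p = c ` set p" using p(1) unfolding is_path_def by auto
    moreover have "?f i = w (i - 1)" "?f j = w (j - 1)" using False ij unfolding cone_map_def by auto
    moreover have "?col (?f i) = i - 1" "?col (?f j) = j - 1" using color_cone_map False ij by auto
    moreover have "0 \<notin> e" using False ij by auto
    ultimately show ?thesis using p(2-4) ends by (intro exI[of _ p]) auto
  qed
qed

lemma v_immersion_cone: "\<exists>P. v_immersion v (K_V (Suc k)) (K_E (Suc k)) V E (cone_map v w) P"
proof (rule v_immersion_KI[OF proper_coloring_fresh_color[OF G c]])
  show "inj_on (c(v := k) \<circ> cone_map v w) (K_V (Suc k))"
    unfolding inj_on_def K_V_def using color_cone_map by (auto split: if_splits)
  show "cone_map v w ` K_V (Suc k) \<subseteq> V" unfolding K_V_def using cone_map_in_V by auto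
qed (fact cone_edge_path | simp add: cone_map_def)+

end

lemma neighbors_linked_if_not_colorable:
  assumes G: "simple_graph V E" and c: "proper_coloring (V - {v}) (del_vertex_E E v) k c"
    and not_col: "\<not> colorable V E k" and "degree E v \<le> k"
  obtains w where "\<And>a. a < k \<Longrightarrow> {v, w a} \<in> E \<and> c (w a) = a"
    and "\<And>a b. a < b \<Longrightarrow> b < k \<Longrightarrow> \<exists>p. is_path (V - {v}) (del_vertex_E E v) p \<and>
      hd p = w a \<and> last p = w b \<and> c ` set p \<subseteq> {a, b}"
proof -
  define N where "N = {u. {v, u} \<in> E}"
  define w where "w = inv_into N c"
  have bij: "bij_betw c N {..<k}"
    unfolding N_def using bij_betw_colors_neighbors[OF G c not_col \<open>degree E v \<le> k\<close>] .
  have w: "{v, w a} \<in> E \<and> c (w a) = a" if "a < k" for a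
    using that bij_betw_inv_into_right[OF bij] bij_betw_apply[OF bij_betw_inv_into[OF bij]]
    unfolding w_def N_def by simp
  have unique: "u = w a" if "{v, u} \<in> E" "c u = a" for u a
    using that inv_into_f_f[of c N u] bij unfolding w_def N_def bij_betw_def by auto
  have "\<exists>p. is_path (V - {v}) (del_vertex_E E v) p \<and> hd p = w a \<and> last p = w b \<and> c ` set p \<subseteq> {a, b}"
    if ab: "a < b" "b < k" for a b
  proof -
    obtain y where "{v, y} \<in> E" "c y = b"
      and chain: "(adj_within (del_vertex_E E v) (\<lambda>z. c z \<in> {a, b}))\<^sup>*\<^sup>* (w a) y"
      using kempe_chain_to_neighbor[OF G c not_col, of a b "w a"] w[of a] unique ab by auto
    then have "y = w b" using unique by blast
    moreover have "w a \<in> V - {v}" using w[of a] simple_graph_edgeD[OF G] ab by fastforce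
    ultimately show ?thesis
      using adj_within_rtranclp_path[OF simple_graph_del_vertex[OF G] chain] w[of a] ab by auto
  qed
  with w show ?thesis using that by blast
qed

theorem colorable_if_no_v_immersion:
  assumes G: "simple_graph V E" and "v \<in> V" and "degree E v \<le> k"
    and no_immersion: "\<not> (\<exists>f P. v_immersion v (K_V (Suc k)) (K_E (Suc k)) V E f P)"
    and "colorable (V - {v}) (del_vertex_E E v) k"
  shows "colorable V E k"
proof (rule ccontr)
  assume not_col: "\<not> colorable V E k"
  obtain c where c: "proper_coloring (V - {v}) (del_vertex_E E v) k c"
    using \<open>colorable (V - {v}) (del_vertex_E E v) k\<close> unfolding colorable_def by blast
  obtain w where "\<And>a. a < k \<Longrightarrow> {v, w a} \<in> E \<and> c (w a) = a"
    and "\<And>a b. a < b \<Longrightarrow> b < k \<Longrightarrow> \<exists>p. is_path (V - {v}) (del_vertex_E E v) p \<and>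
      hd p = w a \<and> last p = w b \<and> c ` set p \<subseteq> {a, b}"
    using neighbors_linked_if_not_colorable[OF G c not_col \<open>degree E v \<le> k\<close>] by blast
  then have "\<exists>P. v_immersion v (K_V (Suc k)) (K_E (Suc k)) V E (cone_map v w) P"
    by (rule v_immersion_cone[OF G \<open>v \<in> V\<close> c])
  with no_immersion show False by blast
qed

theorem lemma2p3:
  fixes V :: "'a set" and E :: "'a set set" and v :: 'a
  assumes "simple_graph V E"
    and "v \<in> V"
    and "degree E v \<le> 5"
    and "\<not> (\<exists>f P. v_immersion v (K_V 6) (K_E 6) V E f P)"
    and "colorable (del_vertex_V V v) (del_vertex_E E v) 5"
  shows "colorable V E 5"
  using colorable_if_no_v_immersion[of V E v 5] assms unfolding del_vertex_V_def by simp

end
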